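(* Let $\mathcal H$ be a separable complex Hilbert space, $\mathcal L_0$ a complete reflexive subspace lattice on $\mathcal H$, $n_0\ge2$ an integer, and $\mathcal L_{n_0}$ the subspace lattice on $\mathcal K_{n_0}$ defined in the context. Then: (1) $(E_{11}\otimes P)_-=(E_{11}\otimes P_-^{\mathcal L_0})\vee Q_\zeta$ for all $P\in\mathcal L_0$; (2) $(F_k)_-=F_{k-1}\vee Q_\zeta$ for $1<k<n_0$; (3) $(Q_\zeta)_-=F_{n_0-1}$; (4) $I_-=I$ and $0_+=0$, where predecessors and successors without superscript are computed in $\mathcal L_{n_0}$.
   Context: A subspace lattice is a family of closed subspaces containing $\{0\}$ and the whole space, closed under arbitrary closed linear spans ($\vee$) and intersections ($\wedge$); subspaces are identified with orthogonal projections, ordered by range inclusion. $\operatorname{Alg}\mathcal L=\{A:AE\subset E\ \forall E\in\mathcal L\}$; $\mathcal L$ is reflexive if it equals the lattice of closed subspaces invariant under all of $\operatorname{Alg}\mathcal L$. For $P\in\mathcal L$: $P_-=\vee\{Q\in\mathcal L:Q\not\ge P\}$ for $P\ne0$, $0_-=0$; $P_+=\wedge\{Q\in\mathcal L: Q\not\le P\}$ for $P\ne I$, $I_+=I$. $P_-^{\mathcal L_0}$ denotes the predecessor of $P$ in $\mathcal L_0$. $\mathcal K_{n_0}=\mathcal H^{(n_0)}$ (direct sum of $n_0$ copies of $\mathcal H$); $\zeta=(a_1,\dots,a_{n_0})\in\mathbb C^{n_0}$ a unit vector with all $a_i\ne0$; $Q_\zeta$ the orthogonal projection onto $\{(a_1x,\dots,a_{n_0}x):x\in\mathcal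 H\}$; $E_{ij}$ the matrix units of $M_{n_0}(\mathbb C)$; $F_k=\sum_{j=1}^kE_{jj}\otimes I$; $\mathcal L_{n_0}$ is the subspace lattice generated by $\{E_{11}\otimes P,Q_\zeta,F_k:P\in\mathcal L_0,2\le k\le n_0\}$. *)

theory Defs
  imports "HOL-Analysis.Analysis" "HOL-Library.Function_Algebras"
begin

text \<open>HOL-Analysis only provides real inner product spaces, so we introduce
complex inner product spaces (norm induced by the complex inner product,
conjugate-linear in the first argument) and complex Hilbert spaces
(complete ones).\<close>

class complex_inner_space = real_normed_vector +
  fixes scaleC :: "complex \<Rightarrow> 'a \<Rightarrow> 'a"
    and cinner :: "'a \<Rightarrow> 'a \<Rightarrow> complex"
  assumes scaleC_add_right: "scaleC c (x + y) = scaleC c x + scaleC c y"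
    and scaleC_add_left: "scaleC (c + d) x = scaleC c x + scaleC d x"
    and scaleC_scaleC: "scaleC c (scaleC d x) = scaleC (c * d) x"
    and scaleC_one: "scaleC 1 x = x"
    and scaleR_scaleC: "scaleR r x = scaleC (complex_of_real r) x"
    and cinner_commute: "cinner x y = cnj (cinner y x)"
    and cinner_add_left: "cinner (x + y) z = cinner x z + cinner y z"
    and cinner_scaleC_left: "cinner (scaleC c x) y = cnj c * cinner x y"
    and cinner_self_nonneg: "0 \<le> Re (cinner x x)"
    and norm_eq_sqrt_cinner: "norm x = sqrt (Re (cinner x x))"

class chilbert_space = complex_inner_space + complete_space

text \<open>Subspaces are represented by their ranges (sets), ordered by inclusion.\<close>

definition lat_join :: "('v set \<Rightarrow> bool) \<Rightarrow> 'v set set \<Rightarrow> 'v set" where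
  "lat_join csub \<S> = \<Inter> {T. csub T \<and> \<Union>\<S> \<subseteq> T}"
  \<comment> \<open>closed linear span: the smallest closed subspace containing all members\<close>

definition lat_meet :: "'v set \<Rightarrow> 'v set set \<Rightarrow> 'v set" where
  "lat_meet Top \<S> = Top \<inter> \<Inter>\<S>"

definition subspace_lattice :: "('v::zero set \<Rightarrow> bool) \<Rightarrow> 'v set \<Rightarrow> 'v set set \<Rightarrow> bool" where
  "subspace_lattice csub Top \<L> \<longleftrightarrow>
     (\<forall>E\<in>\<L>. csub E) \<and> {0} \<in> \<L> \<and> Top \<in> \<L> \<and>
     (\<forall>\<S>. \<S> \<subseteq> \<L> \<longrightarrow> lat_join csub \<S> \<in> \<L> \<and> lat_meet Top \<S> \<in> \<L>)"

definition generated_lattice :: "('v::zero set \<Rightarrow> bool) \<Rightarrow> 'v set \<Rightarrow> 'v set set \<Rightarrow> 'v set set" where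
  "generated_lattice csub Top G = \<Inter> {\<L>. subspace_lattice csub Top \<L> \<and> G \<subseteq> \<L>}"

text \<open>Predecessor \<open>P_-\<close> and successor \<open>P_+\<close> in a lattice \<open>\<L>\<close>.
\<open>Q \<not>\<ge> P\<close> means \<open>\<not> P \<subseteq> Q\<close>.\<close>

definition lat_pred :: "('v::zero set \<Rightarrow> bool) \<Rightarrow> 'v set set \<Rightarrow> 'v set \<Rightarrow> 'v set" where
  "lat_pred csub \<L> P = (if P = {0} then {0} else lat_join csub {Q \<in> \<L>. \<not> P \<subseteq> Q})"

definition lat_succ :: "'v set \<Rightarrow> 'v set set \<Rightarrow> 'v set \<Rightarrow> 'v set" where
  "lat_succ Top \<L> P = (if P = Top then Top else lat_meet Top {Q \<in> \<L>. \<not> Q \<subseteq> P})"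

definition csubspace :: "'a::complex_inner_space set \<Rightarrow> bool" where
  "csubspace S \<longleftrightarrow> 0 \<in> S \<and> (\<forall>x\<in>S. \<forall>y\<in>S. x + y \<in> S) \<and> (\<forall>c. \<forall>x\<in>S. scaleC c x \<in> S)"

definition closed_csubspace :: "'a::complex_inner_space set \<Rightarrow> bool" where
  "closed_csubspace S \<longleftrightarrow> csubspace S \<and> closed S"

definition bounded_clinear_op :: "('a::complex_inner_space \<Rightarrow> 'a) \<Rightarrow> bool" where
  "bounded_clinear_op A \<longleftrightarrow>
     (\<forall>x y. A (x + y) = A x + A y) \<and> (\<forall>c x. A (scaleC c x) = scaleC c (A x)) \<and>
     (\<exists>K. \<forall>x. norm (A x) \<le> K * norm x)"

definition Alg :: "'a::complex_inner_space set set \<Rightarrow> ('a \<Rightarrow> 'a) set" where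
  "Alg \<L> = {A. bounded_clinear_op A \<and> (\<forall>E\<in>\<L>. A ` E \<subseteq> E)}"

definition Lat :: "('a::complex_inner_space \<Rightarrow> 'a) set \<Rightarrow> 'a set set" where
  "Lat \<A> = {E. closed_csubspace E \<and> (\<forall>A\<in>\<A>. A ` E \<subseteq> E)}"

definition reflexive_lattice :: "'a::complex_inner_space set set \<Rightarrow> bool" where
  "reflexive_lattice \<L> \<longleftrightarrow> \<L> = Lat (Alg \<L>)"

definition separable_space :: "'a::topological_space itself \<Rightarrow> bool" where
  "separable_space _ \<longleftrightarrow> (\<exists>D::'a set. countable D \<and> closure D = UNIV)"

text \<open>Elements of \<open>\<H>^{(n)}\<close> are represented as functions \<open>nat \<Rightarrow> 'a\<close> vanishing
at indices \<open>\<ge> n\<close>; coordinate \<open>i\<close> (0-based) is the \<open>(i+1)\<close>-st summand.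
Since only finitely many coordinates are nonzero, the product topology on
\<open>nat \<Rightarrow> 'a\<close> restricted to this space coincides with the Hilbert norm topology.\<close>

definition Kspace :: "nat \<Rightarrow> (nat \<Rightarrow> 'a::complex_inner_space) set" where
  "Kspace n = {x. \<forall>i\<ge>n. x i = 0}"

definition Ksub :: "nat \<Rightarrow> (nat \<Rightarrow> 'a::complex_inner_space) set \<Rightarrow> bool" where
  "Ksub n S \<longleftrightarrow> S \<subseteq> Kspace n \<and> 0 \<in> S \<and>
     (\<forall>x\<in>S. \<forall>y\<in>S. (\<lambda>i. x i + y i) \<in> S) \<and> (\<forall>c. \<forall>x\<in>S. (\<lambda>i. scaleC c (x i)) \<in> S) \<and>
     closed S"

text \<open>\<open>E_{11} \<otimes> P\<close>: range \<open>{(x,0,\<dots>,0) : x \<in> P}\<close>.\<close>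
definition E11_tensor :: "'a::complex_inner_space set \<Rightarrow> (nat \<Rightarrow> 'a) set" where
  "E11_tensor P = {x. x 0 \<in> P \<and> (\<forall>i. i \<noteq> 0 \<longrightarrow> x i = 0)}"

text \<open>\<open>F_k = \<Sum>_{j=1}^k E_{jj} \<otimes> I\<close>: range = vectors supported in the first \<open>k\<close> coordinates.\<close>
definition Fk :: "nat \<Rightarrow> (nat \<Rightarrow> 'a::complex_inner_space) set" where
  "Fk k = {x. \<forall>i\<ge>k. x i = 0}"

text \<open>\<open>Q_\<zeta>\<close>: range \<open>{(a_1 x,\<dots>,a_{n} x) : x \<in> \<H>}\<close>.\<close>
definition Qzeta :: "nat \<Rightarrow> (nat \<Rightarrow> complex) \<Rightarrow> (nat \<Rightarrow> 'a::complex_inner_space) set" where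
  "Qzeta n a = {x. \<exists>h. \<forall>i. x i = (if i < n then scaleC (a i) h else 0)}"

definition L_n0 :: "nat \<Rightarrow> (nat \<Rightarrow> complex) \<Rightarrow> 'a::complex_inner_space set set
                     \<Rightarrow> (nat \<Rightarrow> 'a) set set" where
  "L_n0 n a \<L>0 = generated_lattice (Ksub n) (Kspace n)
      ({E11_tensor P | P. P \<in> \<L>0} \<union> {Qzeta n a} \<union> {Fk k | k. 2 \<le> k \<and> k \<le> n})"

end

theory Submission
  imports Defs
begin

text \<open>The argument rests on a dichotomy principle for generated lattices: if every generator
either contains \<open>A\<close> or is contained in a closed subspace \<open>B\<close>, then so does every member of
the generated lattice, since the subspaces with this property form a subspace lattice.
Taking for \<open>A\<close> the element whose predecessor is sought and for \<open>B\<close> the claimed value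
of \<open>A\<^sub>-\<close>, every member of \<open>\<L>\<^sub>n\<^sub>0\<close> not containing \<open>A\<close> lies in \<open>B\<close>, so \<open>A\<^sub>- \<subseteq> B\<close>;
conversely \<open>B\<close> is spanned by members not containing \<open>A\<close>. In (1) this needs
\<open>E\<^sub>1\<^sub>1 \<otimes> P\<^sub>-\<^sup>\<L>\<^sup>0 \<subseteq> (E\<^sub>1\<^sub>1 \<otimes> P)\<^sub>-\<close>, which holds because the preimage of a closed subspace
under \<open>x \<mapsto> (x, 0, \<dots>, 0)\<close> is a closed subspace of \<open>\<H>\<close>. Finally, a vector of \<open>Q\<^sub>\<zeta>\<close> is
determined by its last coordinate, so \<open>\<K> = F\<^sub>n\<^sub>0\<^sub>-\<^sub>1 + Q\<^sub>\<zeta>\<close> and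
\<open>F\<^sub>n\<^sub>0\<^sub>-\<^sub>1 \<inter> Q\<^sub>\<zeta> = 0\<close>, which gives \<open>I\<^sub>- = I\<close> and \<open>0\<^sub>+ = 0\<close>.\<close>

section \<open>Complex scalar multiplication\<close>

lemma cinner_scaleC_right: "cinner x (scaleC c y) = c * cinner x (y::'a::complex_inner_space)"
  by (metis cinner_commute cinner_scaleC_left complex_cnj_cnj complex_cnj_mult)

lemma norm_scaleC: "norm (scaleC c (x::'a::complex_inner_space)) = cmod c * norm x"
proof -
  have "cinner (scaleC c x) (scaleC c x) = (cnj c * c) * cinner x x"
    by (simp add: cinner_scaleC_left cinner_scaleC_right)
  also have "cnj c * c = complex_of_real ((cmod c)\<^sup>2)"
    using complex_norm_square[of c] by (simp add: mult.commute)
  finally have "Re (cinner (scaleC c x) (scaleC c x)) = (cmod c)\<^sup>2 * Re (cinner x x)"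
    by simp
  then show ?thesis
    by (simp add: norm_eq_sqrt_cinner real_sqrt_mult)
qed

lemma bounded_linear_scaleC: "bounded_linear (scaleC c :: 'a::complex_inner_space \<Rightarrow> 'a)"
proof (rule bounded_linear_intro[where K = "cmod c"])
  show "scaleC c (x + y) = scaleC c x + scaleC c (y::'a)" for x y
    by (rule scaleC_add_right)
  show "scaleC c (scaleR r x) = scaleR r (scaleC c (x::'a))" for r x
    by (simp add: scaleR_scaleC scaleC_scaleC mult.commute)
  show "norm (scaleC c x) \<le> norm (x::'a) * cmod c" for x
    by (simp add: norm_scaleC mult.commute)
qed

lemmas continuous_on_scaleC [continuous_intros] =
  bounded_linear.continuous_on[OF bounded_linear_scaleC]

lemma scaleC_zero_left [simp]: "scaleC 0 (x::'a::complex_inner_space) = 0"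
  using scaleR_scaleC[of 0 x] by simp

lemma scaleC_zero_right [simp]: "scaleC c (0::'a::complex_inner_space) = 0"
  using scaleC_add_right[of c 0 0] by simp

lemma scaleC_eq_0_iff [simp]: "scaleC c (x::'a::complex_inner_space) = 0 \<longleftrightarrow> c = 0 \<or> x = 0"
proof
  assume "scaleC c x = 0"
  moreover have "c \<noteq> 0 \<Longrightarrow> scaleC (inverse c) (scaleC c x) = x"
    by (simp add: scaleC_scaleC scaleC_one)
  ultimately show "c = 0 \<or> x = 0"
    by force
qed auto

section \<open>Generated subspace lattices\<close>

lemma lat_join_least: "csub T \<Longrightarrow> \<Union>\<S> \<subseteq> T \<Longrightarrow> lat_join csub \<S> \<subseteq> T"
  unfolding lat_join_def by auto

lemma lat_join_upper: "Q \<in> \<S> \<Longrightarrow> Q \<subseteq> lat_join csub \<S>"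
  unfolding lat_join_def by auto

lemma generated_lattice_least:
  "subspace_lattice csub Top \<L> \<Longrightarrow> G \<subseteq> \<L> \<Longrightarrow> generated_lattice csub Top G \<subseteq> \<L>"
  unfolding generated_lattice_def by auto

lemma generated_lattice_generator: "g \<in> G \<Longrightarrow> g \<in> generated_lattice csub Top G"
  unfolding generated_lattice_def by auto

locale subspace_closure =
  fixes csub :: "'v::zero set \<Rightarrow> bool" and Top :: "'v set"
  assumes csub_Top: "csub Top"
    and csub_zero: "csub {0}"
    and csub_subset_Top: "csub T \<Longrightarrow> T \<subseteq> Top"
    and zero_in_csub: "csub T \<Longrightarrow> 0 \<in> T"
    and csub_Inter: "\<F> \<noteq> {} \<Longrightarrow> (\<And>T. T \<in> \<F> \<Longrightarrow> csub T) \<Longrightarrow> csub (\<Inter>\<F>)"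
begin

lemma csub_lat_join: "\<Union>\<S> \<subseteq> Top \<Longrightarrow> csub (lat_join csub \<S>)"
  unfolding lat_join_def using csub_Top by (intro csub_Inter) auto

lemma csub_lat_meet: "(\<And>Q. Q \<in> \<S> \<Longrightarrow> csub Q) \<Longrightarrow> csub (lat_meet Top \<S>)"
  unfolding lat_meet_def using csub_Inter[of "insert Top \<S>"] csub_Top by auto

lemma subspace_lattice_dichotomy:
  assumes B: "csub B" and A: "A \<subseteq> Top"
  shows "subspace_lattice csub Top {Q. csub Q \<and> (A \<subseteq> Q \<or> Q \<subseteq> B)}"
  unfolding subspace_lattice_def
proof (intro conjI allI impI)
  show "{0} \<in> {Q. csub Q \<and> (A \<subseteq> Q \<or> Q \<subseteq> B)}"
    using csub_zero zero_in_csub[OF B] by auto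
  show "Top \<in> {Q. csub Q \<and> (A \<subseteq> Q \<or> Q \<subseteq> B)}"
    using csub_Top A by auto
next
  fix \<S> assume \<S>: "\<S> \<subseteq> {Q. csub Q \<and> (A \<subseteq> Q \<or> Q \<subseteq> B)}"
  then have join: "csub (lat_join csub \<S>)" and meet: "csub (lat_meet Top \<S>)"
    using csub_subset_Top by (auto intro!: csub_lat_join csub_lat_meet)
  show "lat_join csub \<S> \<in> {Q. csub Q \<and> (A \<subseteq> Q \<or> Q \<subseteq> B)}"
  proof (cases "\<exists>Q\<in>\<S>. A \<subseteq> Q")
    case True
    then show ?thesis using join lat_join_upper by blast
  next
    case False
    then show ?thesis using join \<S> lat_join_least[of csub B, OF B] by blast
  qed
  show "lat_meet Top \<S> \<in> {Q. csub Q \<and> (A \<subseteq> Q \<or> Q \<subseteq> B)}"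
    using meet \<S> A unfolding lat_meet_def by blast
qed auto

lemma generated_lattice_dichotomy:
  assumes "csub B" "A \<subseteq> Top" "\<And>g. g \<in> G \<Longrightarrow> csub g \<and> (A \<subseteq> g \<or> g \<subseteq> B)"
    and "Q \<in> generated_lattice csub Top G"
  shows "csub Q \<and> (A \<subseteq> Q \<or> Q \<subseteq> B)"
  using generated_lattice_least[OF subspace_lattice_dichotomy[OF assms(1,2)]] assms(3,4) by blast

lemma csub_generated_lattice:
  "(\<And>g. g \<in> G \<Longrightarrow> csub g) \<Longrightarrow> Q \<in> generated_lattice csub Top G \<Longrightarrow> csub Q"
  using generated_lattice_dichotomy[OF csub_Top, of "{}"] by blast

lemma lat_pred_generated_lattice_eqI:
  assumes "A \<noteq> {0}" "A \<subseteq> Top" "csub B"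
    and "\<And>g. g \<in> G \<Longrightarrow> csub g \<and> (A \<subseteq> g \<or> g \<subseteq> B)"
    and "B \<subseteq> lat_join csub {Q \<in> generated_lattice csub Top G. \<not> A \<subseteq> Q}"
  shows "lat_pred csub (generated_lattice csub Top G) A = B"
proof -
  have "lat_join csub {Q \<in> generated_lattice csub Top G. \<not> A \<subseteq> Q} \<subseteq> B"
    using generated_lattice_dichotomy[OF assms(3,2,4)] by (intro lat_join_least[of csub B, OF assms(3)]) blast
  then show ?thesis
    using assms(1,5) unfolding lat_pred_def by auto
qed

end

section \<open>Closed subspaces of \<open>\<H>\<^sup>(\<^sup>n\<^sup>)\<close>\<close>

lemma Fk_eq_Kspace: "Fk k = Kspace k"
  unfolding Fk_def Kspace_def ..

lemma Fk_0: "Fk 0 = {0}"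
  unfolding Fk_def by (auto simp: fun_eq_iff)

lemma Fk_mono: "j \<le> k \<Longrightarrow> Fk j \<subseteq> Fk k"
  unfolding Fk_def by auto

lemma Ksub_Inter:
  assumes "\<F> \<noteq> {}" "\<And>T. T \<in> \<F> \<Longrightarrow> Ksub n T"
  shows "Ksub n (\<Inter>\<F>)"
proof -
  have "\<Inter>\<F> \<subseteq> Kspace n"
    using assms unfolding Ksub_def by blast
  moreover have "closed (\<Inter>\<F>)"
    using assms(2) unfolding Ksub_def by (intro closed_Inter) auto
  ultimately show ?thesis
    using assms(2) unfolding Ksub_def by simp
qed

lemma closed_Kspace: "closed (Kspace n :: (nat \<Rightarrow> 'a::complex_inner_space) set)"
proof -
  have "Kspace n = (\<Inter>i\<in>{n..}. {x::nat \<Rightarrow> 'a. x i = 0})"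
    unfolding Kspace_def by auto
  then show ?thesis
    by (simp add: closed_INT closed_Collect_eq)
qed

lemma Ksub_Fk: "k \<le> n \<Longrightarrow> Ksub n (Fk k :: (nat \<Rightarrow> 'a::complex_inner_space) set)"
  using closed_Kspace[of k] unfolding Ksub_def Fk_eq_Kspace by (auto simp: Kspace_def)

global_interpretation Ksub: subspace_closure "Ksub n" "Kspace n" for n
proof
  show "Ksub n (Kspace n)"
    using Ksub_Fk[of n n] by (simp add: Fk_eq_Kspace)
  show "Ksub n {0}"
    using Ksub_Fk[of 0 n] by (simp add: Fk_0)
  show "Ksub n T \<Longrightarrow> T \<subseteq> Kspace n" and "Ksub n T \<Longrightarrow> 0 \<in> T" for T
    unfolding Ksub_def by auto
qed (rule Ksub_Inter)

lemma Ksub_eq_zero_if_trivial: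
  "\<nexists>v::'a::complex_inner_space. v \<noteq> 0 \<Longrightarrow> Ksub n S \<Longrightarrow> S = {0 :: nat \<Rightarrow> 'a}"
  using Ksub.zero_in_csub by (fastforce simp: fun_eq_iff)

definition embed_first :: "'a::zero \<Rightarrow> nat \<Rightarrow> 'a" where
  "embed_first p = (\<lambda>i. if i = 0 then p else 0)"

lemma embed_first_0 [simp]: "embed_first 0 = 0"
  unfolding embed_first_def by (auto simp: fun_eq_iff)

lemma embed_first_eq_0_iff [simp]: "embed_first p = 0 \<longleftrightarrow> p = 0"
  unfolding embed_first_def by (auto simp: fun_eq_iff)

lemma embed_first_in_E11_tensor_iff [simp]: "embed_first p \<in> E11_tensor P \<longleftrightarrow> p \<in> P"
  unfolding embed_first_def E11_tensor_def by auto

lemma E11_tensor_eq_image: "E11_tensor P = embed_first ` P"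
  unfolding embed_first_def E11_tensor_def by (auto simp: fun_eq_iff)

lemma E11_tensor_subset_iff: "E11_tensor P \<subseteq> E11_tensor P' \<longleftrightarrow> P \<subseteq> P'"
proof
  show "E11_tensor P \<subseteq> E11_tensor P' \<Longrightarrow> P \<subseteq> P'"
    using embed_first_in_E11_tensor_iff by blast
qed (auto simp: E11_tensor_def)

lemma E11_tensor_subset_Fk: "1 \<le> k \<Longrightarrow> E11_tensor P \<subseteq> Fk k"
  unfolding E11_tensor_def Fk_def by auto

lemma Fk_1_eq_E11_tensor: "Fk 1 = E11_tensor UNIV"
  unfolding E11_tensor_def Fk_def by auto

lemma Ksub_E11_tensor:
  assumes P: "closed_csubspace P" and n: "1 \<le> n"
  shows "Ksub n (E11_tensor P)"
proof -
  have "E11_tensor P = (\<lambda>x. x 0) -` P \<inter> (\<Inter>i\<in>{1..}. {x. x i = 0})"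
    unfolding E11_tensor_def by auto
  moreover have "closed \<dots>"
    using P unfolding closed_csubspace_def
    by (intro closed_Int closed_INT ballI closed_vimage closed_Collect_eq) auto
  ultimately show ?thesis
    using P n unfolding Ksub_def E11_tensor_def Kspace_def closed_csubspace_def csubspace_def
    by auto
qed

lemma closed_csubspace_embed_first_vimage:
  assumes R: "Ksub n R"
  shows "closed_csubspace (embed_first -` R)"
proof -
  have "continuous_on UNIV (\<lambda>p::'a. embed_first p i)" for i
    by (cases "i = 0") (simp_all add: embed_first_def)
  then have "continuous_on UNIV (embed_first :: 'a \<Rightarrow> nat \<Rightarrow> 'a)"
    by (rule continuous_on_coordinatewise_then_product)
  then have "closed (embed_first -` R)"
    using R unfolding Ksub_def by (intro closed_vimage) auto
  moreover have "embed_first (p + q) = (\<lambda>i. embed_first p i + embed_first q i)"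
    and "embed_first (scaleC c p) = (\<lambda>i. scaleC c (embed_first p i))"
    for p q :: 'a and c
    unfolding embed_first_def by auto
  ultimately show ?thesis
    using R unfolding closed_csubspace_def csubspace_def Ksub_def by auto
qed

lemma E11_tensor_lat_join_subset:
  assumes R: "Ksub n R" and sub: "\<And>P. P \<in> \<S> \<Longrightarrow> E11_tensor P \<subseteq> R"
  shows "E11_tensor (lat_join closed_csubspace \<S>) \<subseteq> R"
proof -
  have "\<Union>\<S> \<subseteq> embed_first -` R"
    using sub by (auto simp: E11_tensor_eq_image)
  then have "lat_join closed_csubspace \<S> \<subseteq> embed_first -` R"
    by (rule lat_join_least[of closed_csubspace, OF closed_csubspace_embed_first_vimage[OF R]])
  then show ?thesis
    by (auto simp: E11_tensor_eq_image)
qed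

lemma Qzeta_eq:
  assumes "a 0 \<noteq> 0"
  shows "Qzeta n a =
    {x. \<forall>i. x i = (if i < n then scaleC (a i) (scaleC (inverse (a 0)) (x 0)) else 0)}"
proof (intro set_eqI iffI)
  fix x assume "x \<in> Qzeta n a"
  then obtain h where h: "\<And>i. x i = (if i < n then scaleC (a i) h else 0)"
    unfolding Qzeta_def by blast
  have "scaleC (inverse (a 0)) (x 0) = h" if "0 < n"
    using h[of 0] that assms by (simp add: scaleC_scaleC scaleC_one)
  then show "x \<in> {x. \<forall>i. x i = (if i < n then scaleC (a i) (scaleC (inverse (a 0)) (x 0)) else 0)}"
    using h by force
next
  fix x assume "x \<in> {x. \<forall>i. x i = (if i < n then scaleC (a i) (scaleC (inverse (a 0)) (x 0)) else 0)}"
  then show "x \<in> Qzeta n a"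
    unfolding Qzeta_def by blast
qed

lemma zero_in_Qzeta: "(0 :: nat \<Rightarrow> 'a::complex_inner_space) \<in> Qzeta n a"
  unfolding Qzeta_def by (rule CollectI, rule exI[of _ 0]) simp

lemma Ksub_Qzeta:
  assumes a0: "a 0 \<noteq> 0"
  shows "Ksub n (Qzeta n a :: (nat \<Rightarrow> 'a::complex_inner_space) set)"
proof -
  have "continuous_on UNIV
      (\<lambda>x::nat \<Rightarrow> 'a. if i < n then scaleC (a i) (scaleC (inverse (a 0)) (x 0)) else 0)" for i
  proof (cases "i < n")
    case True
    show ?thesis
      unfolding if_P[OF True] by (intro continuous_on_scaleC continuous_on_product_coordinates)
  next
    case False
    show ?thesis
      unfolding if_not_P[OF False] by (rule continuous_on_const)
  qed
  then have "closed {x::nat \<Rightarrow> 'a. x i = (if i < n then scaleC (a i) (scaleC (inverse (a 0)) (x 0)) else 0)}"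
    for i
    by (intro closed_Collect_eq continuous_on_product_coordinates)
  then have closed: "closed (Qzeta n a :: (nat \<Rightarrow> 'a) set)"
    unfolding Qzeta_eq[of a n, OF a0] by (simp add: Collect_all_eq closed_INT)
  have add: "(\<lambda>i. x i + y i) \<in> Qzeta n a" if xy: "x \<in> Qzeta n a" "y \<in> Qzeta n a" for x y :: "nat \<Rightarrow> 'a"
  proof -
    obtain g h where "\<And>i. x i = (if i < n then scaleC (a i) g else 0)"
      and "\<And>i. y i = (if i < n then scaleC (a i) h else 0)"
      using xy unfolding Qzeta_def by blast
    then show ?thesis
      unfolding Qzeta_def by (auto intro!: exI[of _ "g + h"] simp: scaleC_add_right)
  qed
  have scale: "(\<lambda>i. scaleC c (x i)) \<in> Qzeta n a" if x: "x \<in> Qzeta n a" for c and x :: "nat \<Rightarrow> 'a"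
  proof -
    obtain h where "\<And>i. x i = (if i < n then scaleC (a i) h else 0)"
      using x unfolding Qzeta_def by blast
    then show ?thesis
      unfolding Qzeta_def by (auto intro!: exI[of _ "scaleC c h"] simp: scaleC_scaleC mult.commute)
  qed
  have "Qzeta n a \<subseteq> (Kspace n :: (nat \<Rightarrow> 'a) set)"
  proof
    fix x :: "nat \<Rightarrow> 'a" assume "x \<in> Qzeta n a"
    then obtain h where "\<And>i. x i = (if i < n then scaleC (a i) h else 0)"
      unfolding Qzeta_def by blast
    then show "x \<in> Kspace n"
      unfolding Kspace_def by simp
  qed
  then show ?thesis
    unfolding Ksub_def using closed add scale zero_in_Qzeta by simp
qed

lemma E11_tensor_not_subset_Qzeta:
  assumes "p \<in> P" "p \<noteq> 0" "1 < n" "a 1 \<noteq> 0"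
  shows "\<not> E11_tensor P \<subseteq> Qzeta n a"
proof
  assume "E11_tensor P \<subseteq> Qzeta n a"
  then have "embed_first p \<in> Qzeta n a"
    using assms(1) by auto
  then obtain h where h: "\<And>i. embed_first p i = (if i < n then scaleC (a i) h else 0)"
    unfolding Qzeta_def by blast
  have "scaleC (a 1) h = 0"
    using h[of 1] assms(3) by (simp add: embed_first_def)
  then have "h = 0"
    using assms(4) by simp
  then show False
    using h[of 0] assms(2,3) by (simp add: embed_first_def)
qed

lemma Qzeta_not_subset_Fk:
  assumes "(v::'a::complex_inner_space) \<noteq> 0" "j < n" "a j \<noteq> 0"
  shows "\<not> Qzeta n a \<subseteq> (Fk j :: (nat \<Rightarrow> 'a) set)"
proof -
  have "(\<lambda>i. if i < n then scaleC (a i) v else 0) \<in> Qzeta n a"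
    unfolding Qzeta_def by blast
  moreover have "(\<lambda>i. if i < n then scaleC (a i) v else 0) \<notin> Fk j"
    using assms unfolding Fk_def by auto
  ultimately show ?thesis
    by blast
qed

lemma Fk_not_subset_Fk:
  assumes "(v::'a::complex_inner_space) \<noteq> 0" "j < k"
  shows "\<not> Fk k \<subseteq> (Fk j :: (nat \<Rightarrow> 'a) set)"
proof -
  have "(\<lambda>i. if i = j then v else 0) \<in> Fk k - Fk j"
    using assms unfolding Fk_def by auto
  then show ?thesis
    by blast
qed

lemma Fk_not_subset_Qzeta:
  assumes "(v::'a::complex_inner_space) \<noteq> 0" "1 \<le> k" "1 < n" "a 1 \<noteq> 0"
  shows "\<not> Fk k \<subseteq> (Qzeta n a :: (nat \<Rightarrow> 'a) set)"
  using E11_tensor_not_subset_Qzeta[of v UNIV n a] E11_tensor_subset_Fk[of k UNIV] assms by blast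

lemma Kspace_decompose_Fk_Qzeta:
  assumes "0 < n" "a (n - 1) \<noteq> 0" "x \<in> Kspace n"
  shows "\<exists>y \<in> Fk (n - 1). \<exists>z \<in> Qzeta n a. x = (\<lambda>i. y i + z i)"
proof -
  define z where "z = (\<lambda>i. if i < n then scaleC (a i) (scaleC (inverse (a (n - 1))) (x (n - 1))) else 0)"
  have "z \<in> Qzeta n a"
    unfolding z_def Qzeta_def by blast
  moreover have "x i - z i = 0" if "n - 1 \<le> i" for i
  proof (cases "i = n - 1")
    case True
    then show ?thesis
      using assms(1,2) by (simp add: z_def scaleC_scaleC scaleC_one)
  next
    case False
    then show ?thesis
      using assms(3) that unfolding z_def Kspace_def by auto
  qed
  then have "(\<lambda>i. x i - z i) \<in> Fk (n - 1)"
    unfolding Fk_def by blast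
  ultimately show ?thesis
    by force
qed

lemma Qzeta_Int_Fk:
  assumes "0 < n" "a (n - 1) \<noteq> 0"
  shows "Qzeta n a \<inter> Fk (n - 1) = ({0} :: (nat \<Rightarrow> 'a::complex_inner_space) set)"
proof -
  have "x = 0" if xQ: "x \<in> Qzeta n a" and xF: "x \<in> Fk (n - 1)" for x :: "nat \<Rightarrow> 'a"
  proof -
    obtain h where h: "\<And>i. x i = (if i < n then scaleC (a i) h else 0)"
      using xQ unfolding Qzeta_def by blast
    have "scaleC (a (n - 1)) h = 0"
      using h[of "n - 1"] xF assms(1) unfolding Fk_def by simp
    then have "h = 0"
      using assms(2) by simp
    then show ?thesis
      using h by (auto simp: fun_eq_iff)
  qed
  moreover have "(0 :: nat \<Rightarrow> 'a) \<in> Qzeta n a \<inter> Fk (n - 1)"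
    using zero_in_Qzeta by (simp add: Fk_def)
  ultimately show ?thesis
    by blast
qed

section \<open>The lattice \<open>\<L>\<^sub>n\<^sub>0\<close>\<close>

context
  fixes \<L>0 :: "'a::complex_inner_space set set" and n :: nat and a :: "nat \<Rightarrow> complex"
  assumes lat: "subspace_lattice closed_csubspace UNIV \<L>0"
    and n: "1 \<le> n" and a0: "a 0 \<noteq> 0"
begin

lemma closed_csubspace_of_L0: "P \<in> \<L>0 \<Longrightarrow> closed_csubspace P"
  using lat unfolding subspace_lattice_def by auto

lemma lat_join_in_L0: "\<S> \<subseteq> \<L>0 \<Longrightarrow> lat_join closed_csubspace \<S> \<in> \<L>0"
  using lat unfolding subspace_lattice_def by blast

lemma E11_tensor_in_L_n0: "P \<in> \<L>0 \<Longrightarrow> E11_tensor P \<in> L_n0 n a \<L>0"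
  unfolding L_n0_def by (rule generated_lattice_generator) blast

lemma Qzeta_in_L_n0: "Qzeta n a \<in> L_n0 n a \<L>0"
  unfolding L_n0_def by (rule generated_lattice_generator) blast

lemma Fk_in_L_n0:
  assumes "1 \<le> k" "k \<le> n"
  shows "Fk k \<in> L_n0 n a \<L>0"
proof (cases "k = 1")
  case True
  have "UNIV \<in> \<L>0"
    using lat unfolding subspace_lattice_def by auto
  then show ?thesis
    unfolding True Fk_1_eq_E11_tensor by (rule E11_tensor_in_L_n0)
next
  case False
  then show ?thesis
    unfolding L_n0_def using assms by (intro generated_lattice_generator) auto
qed

lemma Ksub_L_n0_generator:
  "g \<in> {E11_tensor P | P. P \<in> \<L>0} \<union> {Qzeta n a} \<union> {Fk k | k. 2 \<le> k \<and> k \<le> n} \<Longrightarrow> Ksub n g"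
  using closed_csubspace_of_L0 Ksub_E11_tensor[OF _ n] Ksub_Qzeta[of a n, OF a0] Ksub_Fk by blast

lemma Ksub_of_L_n0: "Q \<in> L_n0 n a \<L>0 \<Longrightarrow> Ksub n Q"
  unfolding L_n0_def by (rule Ksub.csub_generated_lattice[OF Ksub_L_n0_generator])

lemma Ksub_lat_join_L_n0: "\<S> \<subseteq> L_n0 n a \<L>0 \<Longrightarrow> Ksub n (lat_join (Ksub n) \<S>)"
  by (intro Ksub.csub_lat_join) (use Ksub_of_L_n0 Ksub.csub_subset_Top in blast)

lemma lat_pred_L_n0_eqI:
  assumes "A \<noteq> {0}" "A \<subseteq> Kspace n" "Ksub n B"
    and "\<And>P. P \<in> \<L>0 \<Longrightarrow> A \<subseteq> E11_tensor P \<or> E11_tensor P \<subseteq> B"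
    and "A \<subseteq> Qzeta n a \<or> Qzeta n a \<subseteq> B"
    and "\<And>k. 2 \<le> k \<Longrightarrow> k \<le> n \<Longrightarrow> A \<subseteq> Fk k \<or> Fk k \<subseteq> B"
    and "B \<subseteq> lat_join (Ksub n) {Q \<in> L_n0 n a \<L>0. \<not> A \<subseteq> Q}"
  shows "lat_pred (Ksub n) (L_n0 n a \<L>0) A = B"
  unfolding L_n0_def
proof (rule Ksub.lat_pred_generated_lattice_eqI[OF assms(1-3)])
  show "Ksub n g \<and> (A \<subseteq> g \<or> g \<subseteq> B)"
    if "g \<in> {E11_tensor P | P. P \<in> \<L>0} \<union> {Qzeta n a} \<union> {Fk k | k. 2 \<le> k \<and> k \<le> n}" for g
    using Ksub_L_n0_generator[OF that] that assms(4-6) by auto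
qed (use assms(7) in \<open>simp add: L_n0_def\<close>)

lemma lat_pred_E11_tensor:
  assumes P: "P \<in> \<L>0" "P \<noteq> {0}" and "1 < n" "a 1 \<noteq> 0"
  shows "lat_pred (Ksub n) (L_n0 n a \<L>0) (E11_tensor P) =
    lat_join (Ksub n) {E11_tensor (lat_pred closed_csubspace \<L>0 P), Qzeta n a}"
proof -
  have "0 \<in> P"
    using closed_csubspace_of_L0[OF P(1)] unfolding closed_csubspace_def csubspace_def by simp
  then obtain p where p: "p \<in> P" "p \<noteq> 0"
    using P(2) by blast
  define Pm where "Pm = lat_pred closed_csubspace \<L>0 P"
  have Pm: "Pm = lat_join closed_csubspace {P' \<in> \<L>0. \<not> P \<subseteq> P'}"
    unfolding Pm_def lat_pred_def using P(2) by simp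
  have "E11_tensor Pm \<in> L_n0 n a \<L>0"
    unfolding Pm by (intro E11_tensor_in_L_n0 lat_join_in_L0) blast
  then have B: "Ksub n (lat_join (Ksub n) {E11_tensor Pm, Qzeta n a})"
    using Qzeta_in_L_n0 by (intro Ksub_lat_join_L_n0) blast
  define J where "J = lat_join (Ksub n) {Q \<in> L_n0 n a \<L>0. \<not> E11_tensor P \<subseteq> Q}"
  have J: "Ksub n J"
    unfolding J_def by (rule Ksub_lat_join_L_n0) blast
  have "E11_tensor P' \<subseteq> J" if "P' \<in> \<L>0" "\<not> P \<subseteq> P'" for P'
    unfolding J_def using that E11_tensor_in_L_n0[OF that(1)]
    by (intro lat_join_upper) (simp add: E11_tensor_subset_iff)
  then have "E11_tensor Pm \<subseteq> J"
    unfolding Pm by (intro E11_tensor_lat_join_subset[OF J]) blast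
  moreover have "Qzeta n a \<subseteq> J"
    unfolding J_def using E11_tensor_not_subset_Qzeta[of p P n a, OF p assms(3,4)] Qzeta_in_L_n0
    by (intro lat_join_upper) blast
  ultimately have lower: "lat_join (Ksub n) {E11_tensor Pm, Qzeta n a} \<subseteq> J"
    by (intro lat_join_least[of "Ksub n" J, OF J]) blast
  show ?thesis
    unfolding Pm_def[symmetric]
  proof (rule lat_pred_L_n0_eqI[OF _ _ B])
    show "E11_tensor P \<noteq> {0}"
      using p embed_first_in_E11_tensor_iff embed_first_eq_0_iff by blast
    show "E11_tensor P \<subseteq> Kspace n"
      using Ksub_E11_tensor[OF closed_csubspace_of_L0[OF P(1)] n] Ksub.csub_subset_Top by blast
    show "E11_tensor P \<subseteq> E11_tensor P' \<or> E11_tensor P' \<subseteq> lat_join (Ksub n) {E11_tensor Pm, Qzeta n a}"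
      if "P' \<in> \<L>0" for P'
    proof (cases "P \<subseteq> P'")
      case False
      then have "E11_tensor P' \<subseteq> E11_tensor Pm"
        unfolding E11_tensor_subset_iff Pm using that by (intro lat_join_upper) simp
      also have "E11_tensor Pm \<subseteq> lat_join (Ksub n) {E11_tensor Pm, Qzeta n a}"
        by (simp add: lat_join_upper)
      finally show ?thesis ..
    qed (simp add: E11_tensor_subset_iff)
    show "E11_tensor P \<subseteq> Qzeta n a \<or> Qzeta n a \<subseteq> lat_join (Ksub n) {E11_tensor Pm, Qzeta n a}"
      by (simp add: lat_join_upper)
    show "E11_tensor P \<subseteq> Fk k \<or> Fk k \<subseteq> lat_join (Ksub n) {E11_tensor Pm, Qzeta n a}"
      if "2 \<le> k" for k
      using that E11_tensor_subset_Fk[of k P] by simp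
  qed (use lower J_def in simp)
qed

lemma lat_pred_Fk:
  assumes k: "1 < k" "k < n" and a1: "a 1 \<noteq> 0"
  shows "lat_pred (Ksub n) (L_n0 n a \<L>0) (Fk k) = lat_join (Ksub n) {Fk (k - 1), Qzeta n a}"
proof -
  let ?F = "Fk k :: (nat \<Rightarrow> 'a) set"
  let ?B = "lat_join (Ksub n) {Fk (k - 1), Qzeta n a} :: (nat \<Rightarrow> 'a) set"
  have in_L: "Fk (k - 1) \<in> L_n0 n a \<L>0" "Qzeta n a \<in> L_n0 n a \<L>0"
    using Fk_in_L_n0[of "k - 1"] Qzeta_in_L_n0 k by auto
  then have B: "Ksub n ?B"
    by (intro Ksub_lat_join_L_n0) blast
  show ?thesis
  proof (cases "\<exists>v::'a. v \<noteq> 0")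
    case False
    then have "?F = {0}" "?B = {0}"
      using Ksub_eq_zero_if_trivial[OF False Ksub_Fk[of k n]] Ksub_eq_zero_if_trivial[OF False B] k
      by simp_all
    then show ?thesis
      by (simp add: lat_pred_def)
  next
    case True
    then obtain v :: 'a where v: "v \<noteq> 0"
      by blast
    define J where "J = lat_join (Ksub n) {Q \<in> L_n0 n a \<L>0. \<not> ?F \<subseteq> Q}"
    have J: "Ksub n J"
      unfolding J_def by (rule Ksub_lat_join_L_n0) blast
    have "Fk (k - 1) \<subseteq> J"
      unfolding J_def using in_L(1) Fk_not_subset_Fk[OF v, of "k - 1" k] k
      by (intro lat_join_upper) simp
    moreover have "Qzeta n a \<subseteq> J"
      unfolding J_def using in_L(2) Fk_not_subset_Qzeta[OF v, of k n a] k a1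
      by (intro lat_join_upper) simp
    ultimately have lower: "?B \<subseteq> J"
      by (intro lat_join_least[of "Ksub n" J, OF J]) blast
    show ?thesis
    proof (rule lat_pred_L_n0_eqI[OF _ _ B])
      show "?F \<noteq> {0}"
        using Fk_not_subset_Fk[OF v, of 0 k] k by (auto simp: Fk_0)
      show "?F \<subseteq> Kspace n"
        using Fk_mono[of k n] k by (simp add: Fk_eq_Kspace)
      have FB: "Fk (k - 1) \<subseteq> ?B"
        by (simp add: lat_join_upper)
      show "?F \<subseteq> E11_tensor P \<or> E11_tensor P \<subseteq> ?B" for P
        using subset_trans[OF E11_tensor_subset_Fk[of "k - 1" P] FB] k by simp
      show "?F \<subseteq> Qzeta n a \<or> Qzeta n a \<subseteq> ?B"
        by (simp add: lat_join_upper)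
      show "?F \<subseteq> Fk j \<or> Fk j \<subseteq> ?B" for j
      proof (cases "k \<le> j")
        case False
        then have "Fk j \<subseteq> Fk (k - 1)"
          by (intro Fk_mono) simp
        then show ?thesis
          using subset_trans[OF _ FB] by blast
      qed (simp add: Fk_mono)
    qed (use lower J_def in simp)
  qed
qed

lemma lat_pred_Qzeta:
  assumes "1 < n" "a (n - 1) \<noteq> 0"
  shows "lat_pred (Ksub n) (L_n0 n a \<L>0) (Qzeta n a) = Fk (n - 1)"
proof -
  let ?Q = "Qzeta n a :: (nat \<Rightarrow> 'a) set"
  have Q: "Ksub n ?Q"
    by (rule Ksub_Qzeta[of a n, OF a0])
  have F: "Ksub n (Fk (n - 1) :: (nat \<Rightarrow> 'a) set)"
    by (rule Ksub_Fk) simp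
  show ?thesis
  proof (cases "\<exists>v::'a. v \<noteq> 0")
    case False
    then have "?Q = {0}" "Fk (n - 1) = ({0} :: (nat \<Rightarrow> 'a) set)"
      using Ksub_eq_zero_if_trivial[OF False Q] Ksub_eq_zero_if_trivial[OF False F] by simp_all
    then show ?thesis
      by (simp add: lat_pred_def)
  next
    case True
    then obtain v :: 'a where v: "v \<noteq> 0"
      by blast
    show ?thesis
    proof (rule lat_pred_L_n0_eqI[OF _ _ F])
      show "?Q \<noteq> {0}"
        using Qzeta_not_subset_Fk[OF v, of 0 n a] n a0 by (auto simp: Fk_0)
      show "?Q \<subseteq> Kspace n"
        using Q Ksub.csub_subset_Top by blast
      show "?Q \<subseteq> E11_tensor P \<or> E11_tensor P \<subseteq> Fk (n - 1)" for P
        using E11_tensor_subset_Fk[of "n - 1" P] assms(1) by simp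
      show "?Q \<subseteq> Fk j \<or> Fk j \<subseteq> Fk (n - 1)" if "j \<le> n" for j
      proof (cases "j = n")
        case True
        then show ?thesis
          using \<open>?Q \<subseteq> Kspace n\<close> by (simp add: Fk_eq_Kspace)
      next
        case False
        then show ?thesis
          using that by (intro disjI2 Fk_mono) linarith
      qed
      show "Fk (n - 1) \<subseteq> lat_join (Ksub n) {Q \<in> L_n0 n a \<L>0. \<not> ?Q \<subseteq> Q}"
        using Fk_in_L_n0[of "n - 1"] Qzeta_not_subset_Fk[OF v, of "n - 1" n a] assms
        by (intro lat_join_upper) auto
    qed simp
  qed
qed

lemma lat_pred_Kspace:
  assumes "1 < n" "a 1 \<noteq> 0" "a (n - 1) \<noteq> 0"
  shows "lat_pred (Ksub n) (L_n0 n a \<L>0) (Kspace n) = Kspace n"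
proof -
  let ?K = "Kspace n :: (nat \<Rightarrow> 'a) set"
  show ?thesis
  proof (cases "\<exists>v::'a. v \<noteq> 0")
    case False
    have "?K = {0}"
      by (rule Ksub_eq_zero_if_trivial[OF False Ksub.csub_Top])
    then show ?thesis
      by (simp add: lat_pred_def)
  next
    case True
    then obtain v :: 'a where v: "v \<noteq> 0"
      by blast
    define J where "J = lat_join (Ksub n) {Q \<in> L_n0 n a \<L>0. \<not> ?K \<subseteq> Q}"
    have J: "Ksub n J"
      unfolding J_def by (rule Ksub_lat_join_L_n0) blast
    have FJ: "Fk (n - 1) \<subseteq> J"
      unfolding J_def using Fk_in_L_n0[of "n - 1"] Fk_not_subset_Fk[OF v, of "n - 1" n] assms(1)
      by (intro lat_join_upper) (simp add: Fk_eq_Kspace)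
    have QJ: "Qzeta n a \<subseteq> J"
      unfolding J_def using Qzeta_in_L_n0 Fk_not_subset_Qzeta[OF v, of n n a] assms
      by (intro lat_join_upper) (simp add: Fk_eq_Kspace)
    have "?K \<subseteq> J"
    proof
      fix x assume "x \<in> ?K"
      then obtain y z where "y \<in> Fk (n - 1)" "z \<in> Qzeta n a" and x: "x = (\<lambda>i. y i + z i)"
        using Kspace_decompose_Fk_Qzeta[of n a x] assms by auto
      then have "y \<in> J" "z \<in> J"
        using FJ QJ by blast+
      moreover have "\<forall>y\<in>J. \<forall>z\<in>J. (\<lambda>i. y i + z i) \<in> J"
        using J unfolding Ksub_def by blast
      ultimately show "x \<in> J"
        unfolding x by blast
    qed
    moreover have "J \<subseteq> ?K"
      using J Ksub.csub_subset_Top by blast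
    ultimately have "J = ?K"
      by blast
    moreover have "?K \<noteq> {0}"
      using Fk_not_subset_Fk[OF v, of 0 n] assms(1) unfolding Fk_0 Fk_eq_Kspace[of n] by auto
    ultimately show ?thesis
      unfolding lat_pred_def J_def by presburger
  qed
qed

lemma lat_succ_zero:
  assumes "1 < n" "a (n - 1) \<noteq> 0"
  shows "lat_succ (Kspace n) (L_n0 n a \<L>0) {0} = {0}"
proof -
  let ?K = "Kspace n :: (nat \<Rightarrow> 'a) set"
  let ?S = "{Q \<in> L_n0 n a \<L>0. \<not> Q \<subseteq> {0}}"
  show ?thesis
  proof (cases "\<exists>v::'a. v \<noteq> 0")
    case False
    have "?K = {0}"
      by (rule Ksub_eq_zero_if_trivial[OF False Ksub.csub_Top])
    then show ?thesis
      by (simp add: lat_succ_def)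
  next
    case True
    then obtain v :: 'a where v: "v \<noteq> 0"
      by blast
    have "Qzeta n a \<in> ?S"
      using Qzeta_in_L_n0 Qzeta_not_subset_Fk[OF v, of 0 n a] n a0 by (simp add: Fk_0)
    moreover have "Fk (n - 1) \<in> ?S"
      using Fk_in_L_n0[of "n - 1"] Fk_not_subset_Fk[OF v, of 0 "n - 1"] assms(1) by (simp add: Fk_0)
    ultimately have "lat_meet ?K ?S \<subseteq> Qzeta n a \<inter> Fk (n - 1)"
      unfolding lat_meet_def by blast
    also have "\<dots> = {0}"
      using Qzeta_Int_Fk[of n a] assms by simp
    finally have "lat_meet ?K ?S \<subseteq> {0}" .
    moreover have "0 \<in> lat_meet ?K ?S"
      by (rule Ksub.zero_in_csub[of n], rule Ksub.csub_lat_meet) (use Ksub_of_L_n0 in blast)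
    ultimately have "lat_meet ?K ?S = {0}"
      by blast
    moreover have "{0} \<noteq> ?K"
      using Fk_not_subset_Fk[OF v, of 0 n] assms(1) unfolding Fk_0 Fk_eq_Kspace[of n] by auto
    ultimately show ?thesis
      unfolding lat_succ_def by presburger
  qed
qed

end

theorem mainTheorem2:
  fixes \<L>0 :: "'a::chilbert_space set set"
    and n0 :: nat
    and a :: "nat \<Rightarrow> complex"
  assumes sep: "separable_space TYPE('a)"
    and lat: "subspace_lattice closed_csubspace UNIV \<L>0"
    and refl: "reflexive_lattice \<L>0"
    and n0: "2 \<le> n0"
    and unit: "(\<Sum>i<n0. (cmod (a i))\<^sup>2) = 1"
    and nz: "\<forall>i<n0. a i \<noteq> 0"
  shows "(\<forall>P\<in>\<L>0. P \<noteq> {0} \<longrightarrow>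
            lat_pred (Ksub n0) (L_n0 n0 a \<L>0) (E11_tensor P) =
            lat_join (Ksub n0) {E11_tensor (lat_pred closed_csubspace \<L>0 P), Qzeta n0 a})
       \<and> (\<forall>k. 1 < k \<and> k < n0 \<longrightarrow>
            lat_pred (Ksub n0) (L_n0 n0 a \<L>0) (Fk k) =
            lat_join (Ksub n0) {Fk (k - 1), Qzeta n0 a})
       \<and> lat_pred (Ksub n0) (L_n0 n0 a \<L>0) (Qzeta n0 a) = Fk (n0 - 1)
       \<and> lat_pred (Ksub n0) (L_n0 n0 a \<L>0) (Kspace n0) = Kspace n0
       \<and> lat_succ (Kspace n0) (L_n0 n0 a \<L>0) {0} = {0}"
proof -
  have n: "1 \<le> n0" "1 < n0"
    using n0 by auto
  have a: "a 0 \<noteq> 0" "a 1 \<noteq> 0" "a (n0 - 1) \<noteq> 0"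
    using nz n0 by auto
  show ?thesis
  proof (intro conjI allI impI ballI)
    show "lat_pred (Ksub n0) (L_n0 n0 a \<L>0) (E11_tensor P) =
        lat_join (Ksub n0) {E11_tensor (lat_pred closed_csubspace \<L>0 P), Qzeta n0 a}"
      if "P \<in> \<L>0" "P \<noteq> {0}" for P
      by (rule lat_pred_E11_tensor[OF lat n(1) a(1) that n(2) a(2)])
    show "lat_pred (Ksub n0) (L_n0 n0 a \<L>0) (Fk k) = lat_join (Ksub n0) {Fk (k - 1), Qzeta n0 a}"
      if "1 < k \<and> k < n0" for k
      using that lat_pred_Fk[OF lat n(1) a(1) _ _ a(2)] by blast
  qed (simp_all add: lat_pred_Qzeta[OF lat n(1) a(1) n(2) a(3)]
      lat_pred_Kspace[OF lat n(1) a(1) n(2) a(2,3)] lat_succ_zero[OF lat n(1) a(1) n(2) a(3)])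
qed

end
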